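(* Let $F\colon\mathscr C\to\mathscr D$ be a strict symmetric monoidal functor between small permutative categories. Then $F$ is an equivalence of underlying categories if and only if $\Phi(F)\colon\Phi(\mathscr C)\to\Phi(\mathscr D)$ is an equivalence of underlying categories.
   Context: A permutative category is a symmetric monoidal category $(\mathscr C,\otimes,\mathbf 1,\tau)$ whose associativity and unit isomorphisms are identities. For $\sigma\in\Sigma_m$ the coherence isomorphism $\bigotimes_{i=1}^mX_i\to\bigotimes_{i=1}^mX_{\sigma^{-1}(i)}$ associated to $\sigma$ is the composite of maps $\mathrm{id}\otimes\tau_{X,Y}\otimes\mathrm{id}$ along a decomposition of $\sigma$ into adjacent transpositions. Let $\omega=\{1,2,\dots\}$ and $\mathcal M$ the monoid of injections $\omega\to\omega$. For a small permutative category $\mathscr C$, $\Phi(\mathscr C)$ is the category whose objects are sequences $X=(X_1,X_2,\dots)$ of objects of $\mathscr C$ with $X_i=\mathbf 1$ for almost all $i$, with $\mathrm{Hom}_{\Phi(\mathscr C)}(X,Y)=\mathrm{Hom}_{\mathscr C}(\bigotimes_{i\in\omega}X_i,\bigotimes_{i\in\omega}Y_i)$ (the ordered tensor product of the finitely many non-unit entries) and composition from $\mathscr C$; it carries an action of the monoid $\mathcal M$ with $(u_*X)_i=X_j$ if $i=u(j)$ and $\mathbf 1$ if $i\notin\mathrm{im}(u)$, structure isomorphisms $X\to u_*X$ given by coherence isomorphisms, and a partial sum (merging disjointly supported sequences), making it a parsummable category. For a strict symmetric monoidal functor $F$, $\Phi(F)$ sends $X$ to $(F(X_1),F(X_2),\dots)$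 and a morphism $f$ to $F(f)$. *)

theory Defs
  imports Main
begin

record ('o, 'm) cat =
  Ob   :: "'o set"
  Ar   :: "'m set"
  Dom  :: "'m \<Rightarrow> 'o"
  Cod  :: "'m \<Rightarrow> 'o"
  Idn  :: "'o \<Rightarrow> 'm"
  Comp :: "'m \<Rightarrow> 'm \<Rightarrow> 'm"   (* Comp C g f = g \<circ> f *)

definition hom :: "('o, 'm, 'x) cat_scheme \<Rightarrow> 'o \<Rightarrow> 'o \<Rightarrow> 'm set" where
  "hom C X Y = {f \<in> Ar C. Dom C f = X \<and> Cod C f = Y}"

definition category :: "('o, 'm, 'x) cat_scheme \<Rightarrow> bool" where
  "category C \<longleftrightarrow>
     (\<forall>f\<in>Ar C. Dom C f \<in> Ob C \<and> Cod C f \<in> Ob C) \<and>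
     (\<forall>X\<in>Ob C. Idn C X \<in> hom C X X) \<and>
     (\<forall>f\<in>Ar C. \<forall>g\<in>Ar C. Cod C f = Dom C g \<longrightarrow>
        Comp C g f \<in> hom C (Dom C f) (Cod C g)) \<and>
     (\<forall>f\<in>Ar C. Comp C (Idn C (Cod C f)) f = f \<and> Comp C f (Idn C (Dom C f)) = f) \<and>
     (\<forall>f\<in>Ar C. \<forall>g\<in>Ar C. \<forall>h\<in>Ar C. Cod C f = Dom C g \<longrightarrow> Cod C g = Dom C h \<longrightarrow>
        Comp C h (Comp C g f) = Comp C (Comp C h g) f)"

definition iso :: "('o, 'm, 'x) cat_scheme \<Rightarrow> 'm \<Rightarrow> bool" where
  "iso C f \<longleftrightarrow> f \<in> Ar C \<and>
     (\<exists>g\<in>hom C (Cod C f) (Dom C f). Comp C g f = Idn C (Dom C f) \<and> Comp C f g = Idn C (Cod C f))"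

definition "functor" :: "('o, 'm, 'x) cat_scheme \<Rightarrow> ('p, 'n, 'y) cat_scheme \<Rightarrow>
    ('o \<Rightarrow> 'p) \<Rightarrow> ('m \<Rightarrow> 'n) \<Rightarrow> bool" where
  "functor C D Fo Fa \<longleftrightarrow>
     (\<forall>X\<in>Ob C. Fo X \<in> Ob D) \<and>
     (\<forall>f\<in>Ar C. Fa f \<in> hom D (Fo (Dom C f)) (Fo (Cod C f))) \<and>
     (\<forall>X\<in>Ob C. Fa (Idn C X) = Idn D (Fo X)) \<and>
     (\<forall>f\<in>Ar C. \<forall>g\<in>Ar C. Cod C f = Dom C g \<longrightarrow> Fa (Comp C g f) = Comp D (Fa g) (Fa f))"

definition nat_iso :: "('o, 'm, 'x) cat_scheme \<Rightarrow> ('p, 'n, 'y) cat_scheme \<Rightarrow>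
    ('o \<Rightarrow> 'p) \<Rightarrow> ('m \<Rightarrow> 'n) \<Rightarrow> ('o \<Rightarrow> 'p) \<Rightarrow> ('m \<Rightarrow> 'n) \<Rightarrow> ('o \<Rightarrow> 'n) \<Rightarrow> bool" where
  "nat_iso C D Fo Fa Go Ga \<eta> \<longleftrightarrow>
     (\<forall>X\<in>Ob C. \<eta> X \<in> hom D (Fo X) (Go X) \<and> iso D (\<eta> X)) \<and>
     (\<forall>f\<in>Ar C. Comp D (\<eta> (Cod C f)) (Fa f) = Comp D (Ga f) (\<eta> (Dom C f)))"

definition equivalence :: "('o, 'm, 'x) cat_scheme \<Rightarrow> ('p, 'n, 'y) cat_scheme \<Rightarrow>
    ('o \<Rightarrow> 'p) \<Rightarrow> ('m \<Rightarrow> 'n) \<Rightarrow> bool" where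
  "equivalence C D Fo Fa \<longleftrightarrow> functor C D Fo Fa \<and>
     (\<exists>Go Ga. functor D C Go Ga \<and>
        (\<exists>\<eta>. nat_iso C C id id (Go \<circ> Fo) (Ga \<circ> Fa) \<eta>) \<and>
        (\<exists>\<epsilon>. nat_iso D D (Fo \<circ> Go) (Fa \<circ> Ga) id id \<epsilon>))"

record ('o, 'm) pcat = "('o, 'm) cat" +
  Ten  :: "'o \<Rightarrow> 'o \<Rightarrow> 'o"
  TenA :: "'m \<Rightarrow> 'm \<Rightarrow> 'm"
  Unit :: "'o"
  Sym  :: "'o \<Rightarrow> 'o \<Rightarrow> 'm"

definition permutative :: "('o, 'm, 'x) pcat_scheme \<Rightarrow> bool" where
  "permutative C \<longleftrightarrow> category C \<and>
     Unit C \<in> Ob C \<and>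
     \<comment> \<open>tensor is a bifunctor\<close>
     (\<forall>X\<in>Ob C. \<forall>Y\<in>Ob C. Ten C X Y \<in> Ob C) \<and>
     (\<forall>f\<in>Ar C. \<forall>g\<in>Ar C. TenA C f g \<in> hom C (Ten C (Dom C f) (Dom C g)) (Ten C (Cod C f) (Cod C g))) \<and>
     (\<forall>X\<in>Ob C. \<forall>Y\<in>Ob C. TenA C (Idn C X) (Idn C Y) = Idn C (Ten C X Y)) \<and>
     (\<forall>f\<in>Ar C. \<forall>g\<in>Ar C. \<forall>f'\<in>Ar C. \<forall>g'\<in>Ar C. Cod C f = Dom C g \<longrightarrow> Cod C f' = Dom C g' \<longrightarrow>
        TenA C (Comp C g f) (Comp C g' f') = Comp C (TenA C g g') (TenA C f f')) \<and>
     \<comment> \<open>strict associativity and unit\<close>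
     (\<forall>X\<in>Ob C. \<forall>Y\<in>Ob C. \<forall>Z\<in>Ob C. Ten C (Ten C X Y) Z = Ten C X (Ten C Y Z)) \<and>
     (\<forall>f\<in>Ar C. \<forall>g\<in>Ar C. \<forall>h\<in>Ar C. TenA C (TenA C f g) h = TenA C f (TenA C g h)) \<and>
     (\<forall>X\<in>Ob C. Ten C (Unit C) X = X \<and> Ten C X (Unit C) = X) \<and>
     (\<forall>f\<in>Ar C. TenA C (Idn C (Unit C)) f = f \<and> TenA C f (Idn C (Unit C)) = f) \<and>
     \<comment> \<open>symmetry: natural, involutive, hexagon, unit condition\<close>
     (\<forall>X\<in>Ob C. \<forall>Y\<in>Ob C. Sym C X Y \<in> hom C (Ten C X Y) (Ten C Y X)) \<and>
     (\<forall>f\<in>Ar C. \<forall>g\<in>Ar C. Comp C (Sym C (Cod C f) (Cod C g)) (TenA C f g)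
                         = Comp C (TenA C g f) (Sym C (Dom C f) (Dom C g))) \<and>
     (\<forall>X\<in>Ob C. \<forall>Y\<in>Ob C. Comp C (Sym C Y X) (Sym C X Y) = Idn C (Ten C X Y)) \<and>
     (\<forall>X\<in>Ob C. \<forall>Y\<in>Ob C. \<forall>Z\<in>Ob C. Sym C X (Ten C Y Z)
        = Comp C (TenA C (Idn C Y) (Sym C X Z)) (TenA C (Sym C X Y) (Idn C Z))) \<and>
     (\<forall>X\<in>Ob C. Sym C X (Unit C) = Idn C X)"

definition strict_sym_monoidal_functor :: "('o, 'm, 'x) pcat_scheme \<Rightarrow> ('p, 'n, 'y) pcat_scheme \<Rightarrow>
    ('o \<Rightarrow> 'p) \<Rightarrow> ('m \<Rightarrow> 'n) \<Rightarrow> bool" where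
  "strict_sym_monoidal_functor C D Fo Fa \<longleftrightarrow> functor C D Fo Fa \<and>
     (\<forall>X\<in>Ob C. \<forall>Y\<in>Ob C. Fo (Ten C X Y) = Ten D (Fo X) (Fo Y)) \<and>
     (\<forall>f\<in>Ar C. \<forall>g\<in>Ar C. Fa (TenA C f g) = TenA D (Fa f) (Fa g)) \<and>
     Fo (Unit C) = Unit D \<and>
     (\<forall>X\<in>Ob C. \<forall>Y\<in>Ob C. Fa (Sym C X Y) = Sym D (Fo X) (Fo Y))"

text \<open>Ordered tensor product of a finitely supported sequence (indexed by \<open>nat\<close>):
  tensoring the entries up to the end of the support; by strict unitality this is
  the ordered tensor product of the non-unit entries.\<close>
definition bigten :: "('o, 'm, 'x) pcat_scheme \<Rightarrow> (nat \<Rightarrow> 'o) \<Rightarrow> 'o" where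
  "bigten C X = foldr (Ten C) (map X [0..<(LEAST n. \<forall>i\<ge>n. X i = Unit C)]) (Unit C)"

definition Phi_obs :: "('o, 'm, 'x) pcat_scheme \<Rightarrow> (nat \<Rightarrow> 'o) set" where
  "Phi_obs C = {X. (\<forall>i. X i \<in> Ob C) \<and> finite {i. X i \<noteq> Unit C}}"

definition Phi :: "('o, 'm, 'x) pcat_scheme \<Rightarrow> (nat \<Rightarrow> 'o, (nat \<Rightarrow> 'o) \<times> (nat \<Rightarrow> 'o) \<times> 'm) cat" where
  "Phi C = \<lparr> Ob = Phi_obs C,
             Ar = {(X, Y, f) | X Y f. X \<in> Phi_obs C \<and> Y \<in> Phi_obs C \<and> f \<in> hom C (bigten C X) (bigten C Y)},
             Dom = (\<lambda>(X, Y, f). X),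
             Cod = (\<lambda>(X, Y, f). Y),
             Idn = (\<lambda>X. (X, X, Idn C (bigten C X))),
             Comp = (\<lambda>(Y', Z, g) (X, Y, f). (X, Z, Comp C g f)) \<rparr>"

definition Phi_ob :: "('o \<Rightarrow> 'p) \<Rightarrow> (nat \<Rightarrow> 'o) \<Rightarrow> (nat \<Rightarrow> 'p)" where
  "Phi_ob Fo X = (\<lambda>i. Fo (X i))"

definition Phi_ar :: "('o \<Rightarrow> 'p) \<Rightarrow> ('m \<Rightarrow> 'n) \<Rightarrow>
    (nat \<Rightarrow> 'o) \<times> (nat \<Rightarrow> 'o) \<times> 'm \<Rightarrow> (nat \<Rightarrow> 'p) \<times> (nat \<Rightarrow> 'p) \<times> 'n" where
  "Phi_ar Fo Fa = (\<lambda>(X, Y, f). (Phi_ob Fo X, Phi_ob Fo Y, Fa f))"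

end

theory Submission
  imports Defs
begin

text \<open>
  A morphism \<open>X \<rightarrow> Y\<close> of \<open>\<Phi>(C)\<close> is a morphism of \<open>C\<close> between the ordered tensor
  products \<open>\<Otimes>X\<close> and \<open>\<Otimes>Y\<close>, and a strict monoidal \<open>F\<close> satisfies
  \<open>F(\<Otimes>X) = \<Otimes>\<Phi>(F)X\<close>; so on each hom-set \<open>\<Phi>(F)\<close> simply acts as \<open>F\<close>. Hence \<open>F\<close> is
  faithful, full or essentially surjective iff \<open>\<Phi>(F)\<close> is: from \<open>\<Phi>(F)\<close> back to \<open>F\<close> one
  tests on one-entry sequences \<open>(A, \<one>, \<one>, \<dots>)\<close>, and an object \<open>Y\<close> of \<open>\<Phi>(D)\<close> is
  reached by choosing \<open>F X\<^sub>i \<cong> Y\<^sub>i\<close> entrywise (with \<open>X\<^sub>i = \<one>\<close> where \<open>Y\<^sub>i = \<one>\<close>) and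
  tensoring these isomorphisms. Since equivalences are exactly the fully faithful, essentially
  surjective functors, the theorem follows.
\<close>

definition inv_ar :: "('o, 'm, 'x) cat_scheme \<Rightarrow> 'm \<Rightarrow> 'm" where
  "inv_ar C f = (SOME g. g \<in> hom C (Cod C f) (Dom C f) \<and>
     Comp C g f = Idn C (Dom C f) \<and> Comp C f g = Idn C (Cod C f))"

lemma iso_in_Ar [simp]: "iso C f \<Longrightarrow> f \<in> Ar C"
  by (simp add: iso_def)

lemma inv_ar_inverse:
  "iso C f \<Longrightarrow> inv_ar C f \<in> hom C (Cod C f) (Dom C f) \<and>
     Comp C (inv_ar C f) f = Idn C (Dom C f) \<and> Comp C f (inv_ar C f) = Idn C (Cod C f)"
  unfolding inv_ar_def iso_def by (rule someI_ex) blast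

lemma
  assumes "iso C f"
  shows inv_ar_in_Ar [simp]: "inv_ar C f \<in> Ar C"
    and Dom_inv_ar [simp]: "Dom C (inv_ar C f) = Cod C f"
    and Cod_inv_ar [simp]: "Cod C (inv_ar C f) = Dom C f"
    and Comp_inv_ar_left [simp]: "Comp C (inv_ar C f) f = Idn C (Dom C f)"
    and Comp_inv_ar_right [simp]: "Comp C f (inv_ar C f) = Idn C (Cod C f)"
  using inv_ar_inverse[OF assms] by (simp_all add: hom_def)

lemma iso_inv_ar: "iso C f \<Longrightarrow> iso C (inv_ar C f)"
  unfolding iso_def[of C "inv_ar C f"] by (intro conjI bexI[of _ f]) (simp_all add: hom_def)

context
  fixes C :: "('o, 'm, 'x) cat_scheme"
  assumes cat: "category C"
begin

lemma Dom_in_Ob [simp]: "f \<in> Ar C \<Longrightarrow> Dom C f \<in> Ob C"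
  and Cod_in_Ob [simp]: "f \<in> Ar C \<Longrightarrow> Cod C f \<in> Ob C"
  using cat unfolding category_def by blast+

lemma Idn_in_Ar [simp]: "X \<in> Ob C \<Longrightarrow> Idn C X \<in> Ar C"
  and Dom_Idn [simp]: "X \<in> Ob C \<Longrightarrow> Dom C (Idn C X) = X"
  and Cod_Idn [simp]: "X \<in> Ob C \<Longrightarrow> Cod C (Idn C X) = X"
  using cat unfolding category_def hom_def by blast+

lemma Comp_in_Ar [simp]: "f \<in> Ar C \<Longrightarrow> g \<in> Ar C \<Longrightarrow> Cod C f = Dom C g \<Longrightarrow> Comp C g f \<in> Ar C"
  and Dom_Comp [simp]: "f \<in> Ar C \<Longrightarrow> g \<in> Ar C \<Longrightarrow> Cod C f = Dom C g \<Longrightarrow> Dom C (Comp C g f) = Dom C f"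
  and Cod_Comp [simp]: "f \<in> Ar C \<Longrightarrow> g \<in> Ar C \<Longrightarrow> Cod C f = Dom C g \<Longrightarrow> Cod C (Comp C g f) = Cod C g"
  using cat unfolding category_def hom_def by blast+

lemma Comp_Idn_left [simp]: "f \<in> Ar C \<Longrightarrow> Cod C f = Y \<Longrightarrow> Comp C (Idn C Y) f = f"
  and Comp_Idn_right [simp]: "f \<in> Ar C \<Longrightarrow> Dom C f = X \<Longrightarrow> Comp C f (Idn C X) = f"
  using cat unfolding category_def by blast+

lemma Comp_assoc [simp]:
  "f \<in> Ar C \<Longrightarrow> g \<in> Ar C \<Longrightarrow> h \<in> Ar C \<Longrightarrow> Cod C f = Dom C g \<Longrightarrow> Cod C g = Dom C h \<Longrightarrow>
   Comp C (Comp C h g) f = Comp C h (Comp C g f)"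
  using cat unfolding category_def by metis

lemma iso_Idn [simp]: "X \<in> Ob C \<Longrightarrow> iso C (Idn C X)"
  using cat unfolding iso_def by (auto simp: hom_def)

lemma Comp_inv_ar_Comp [simp]:
  "iso C f \<Longrightarrow> g \<in> Ar C \<Longrightarrow> Cod C g = Dom C f \<Longrightarrow> Comp C (inv_ar C f) (Comp C f g) = g"
  using cat Comp_assoc[of g f "inv_ar C f"] by simp

lemma Comp_Comp_inv_ar [simp]:
  "iso C f \<Longrightarrow> g \<in> Ar C \<Longrightarrow> Cod C g = Cod C f \<Longrightarrow> Comp C f (Comp C (inv_ar C f) g) = g"
  using cat Comp_assoc[of g "inv_ar C f" f] by simp

lemma iso_cancel_left:
  assumes "iso C h" "f \<in> Ar C" "f' \<in> Ar C" "Cod C f = Dom C h" "Cod C f' = Dom C h"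
    and "Comp C h f = Comp C h f'"
  shows "f = f'"
  by (metis Comp_inv_ar_Comp assms)

lemma iso_cancel_right:
  assumes "iso C h" "f \<in> Ar C" "f' \<in> Ar C" "Dom C f = Cod C h" "Dom C f' = Cod C h"
    and "Comp C f h = Comp C f' h"
  shows "f = f'"
proof -
  have "f = Comp C (Comp C f h) (inv_ar C h)" and "f' = Comp C (Comp C f' h) (inv_ar C h)"
    using assms(1-5) cat by simp_all
  then show ?thesis
    using assms(6) by metis
qed

end

context
  fixes C :: "('o, 'm, 'x) cat_scheme" and D :: "('p, 'n, 'y) cat_scheme"
    and Fo :: "'o \<Rightarrow> 'p" and Fa :: "'m \<Rightarrow> 'n"
  assumes F: "functor C D Fo Fa"
begin

lemma functor_Ob [simp]: "X \<in> Ob C \<Longrightarrow> Fo X \<in> Ob D"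
  using F unfolding functor_def by blast

lemma functor_Ar [simp]: "f \<in> Ar C \<Longrightarrow> Fa f \<in> Ar D"
  and functor_Dom [simp]: "f \<in> Ar C \<Longrightarrow> Dom D (Fa f) = Fo (Dom C f)"
  and functor_Cod [simp]: "f \<in> Ar C \<Longrightarrow> Cod D (Fa f) = Fo (Cod C f)"
  using F unfolding functor_def hom_def by blast+

lemma functor_Idn [simp]: "X \<in> Ob C \<Longrightarrow> Fa (Idn C X) = Idn D (Fo X)"
  using F unfolding functor_def by blast

lemma functor_Comp [simp]:
  "f \<in> Ar C \<Longrightarrow> g \<in> Ar C \<Longrightarrow> Cod C f = Dom C g \<Longrightarrow> Fa (Comp C g f) = Comp D (Fa g) (Fa f)"
  using F unfolding functor_def by blast

end

section \<open>Equivalences as fully faithful, essentially surjective functors\<close>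

definition faithful :: "('o, 'm, 'x) cat_scheme \<Rightarrow> ('m \<Rightarrow> 'n) \<Rightarrow> bool" where
  "faithful C Fa \<longleftrightarrow> (\<forall>f\<in>Ar C. \<forall>g\<in>Ar C.
     Dom C f = Dom C g \<longrightarrow> Cod C f = Cod C g \<longrightarrow> Fa f = Fa g \<longrightarrow> f = g)"

definition full :: "('o, 'm, 'x) cat_scheme \<Rightarrow> ('p, 'n, 'y) cat_scheme \<Rightarrow>
    ('o \<Rightarrow> 'p) \<Rightarrow> ('m \<Rightarrow> 'n) \<Rightarrow> bool" where
  "full C D Fo Fa \<longleftrightarrow> (\<forall>X\<in>Ob C. \<forall>Y\<in>Ob C. \<forall>g\<in>hom D (Fo X) (Fo Y). \<exists>f\<in>hom C X Y. Fa f = g)"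

definition ess_surj :: "('o, 'm, 'x) cat_scheme \<Rightarrow> ('p, 'n, 'y) cat_scheme \<Rightarrow> ('o \<Rightarrow> 'p) \<Rightarrow> bool" where
  "ess_surj C D Fo \<longleftrightarrow> (\<forall>B\<in>Ob D. \<exists>A\<in>Ob C. \<exists>g. g \<in> hom D (Fo A) B \<and> iso D g)"

lemma faithfulD:
  "faithful C Fa \<Longrightarrow> f \<in> Ar C \<Longrightarrow> g \<in> Ar C \<Longrightarrow> Dom C f = Dom C g \<Longrightarrow> Cod C f = Cod C g \<Longrightarrow>
   Fa f = Fa g \<Longrightarrow> f = g"
  unfolding faithful_def by blast

lemma faithful_if_nat_iso_from_id:
  assumes "category C" and "nat_iso C C id id Ho Ha \<eta>"
  shows "faithful C Ha"
  unfolding faithful_def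
proof (intro ballI impI)
  fix f g
  assume fg: "f \<in> Ar C" "g \<in> Ar C" "Dom C f = Dom C g" "Cod C f = Cod C g" "Ha f = Ha g"
  have \<eta>: "\<eta> (Cod C f) \<in> hom C (Cod C f) (Ho (Cod C f))" "iso C (\<eta> (Cod C f))"
    using assms fg by (simp_all add: nat_iso_def)
  have "Comp C (\<eta> (Cod C f)) f = Comp C (\<eta> (Cod C g)) g"
    using assms(2) fg unfolding nat_iso_def by (metis id_apply)
  then show "f = g"
    using iso_cancel_left[OF assms(1) \<eta>(2)] fg \<eta>(1) by (simp add: hom_def)
qed

lemma faithful_if_nat_iso_to_id:
  assumes "category C" and "nat_iso C C Ho Ha id id \<epsilon>"
  shows "faithful C Ha"
  unfolding faithful_def
proof (intro ballI impI)
  fix f g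
  assume fg: "f \<in> Ar C" "g \<in> Ar C" "Dom C f = Dom C g" "Cod C f = Cod C g" "Ha f = Ha g"
  have \<epsilon>: "\<epsilon> (Dom C f) \<in> hom C (Ho (Dom C f)) (Dom C f)" "iso C (\<epsilon> (Dom C f))"
    using assms fg by (simp_all add: nat_iso_def)
  have "Comp C f (\<epsilon> (Dom C f)) = Comp C g (\<epsilon> (Dom C g))"
    using assms(2) fg unfolding nat_iso_def by (metis id_apply)
  then show "f = g"
    using iso_cancel_right[OF assms(1) \<epsilon>(2)] fg \<epsilon>(1) by (simp add: hom_def)
qed

lemma equivalence_faithful:
  assumes "category C" and "equivalence C D Fo Fa"
  shows "faithful C Fa"
proof -
  obtain Go Ga \<eta> where "nat_iso C C id id (Go \<circ> Fo) (Ga \<circ> Fa) \<eta>"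
    using assms(2) unfolding equivalence_def by blast
  then have "faithful C (Ga \<circ> Fa)"
    by (rule faithful_if_nat_iso_from_id[OF assms(1)])
  then show ?thesis
    unfolding faithful_def by auto
qed

lemma equivalence_ess_surj:
  assumes "equivalence C D Fo Fa"
  shows "ess_surj C D Fo"
  unfolding ess_surj_def
proof
  fix B
  assume B: "B \<in> Ob D"
  obtain Go Ga \<epsilon> where "functor D C Go Ga" and "nat_iso D D (Fo \<circ> Go) (Fa \<circ> Ga) id id \<epsilon>"
    using assms unfolding equivalence_def by blast
  then show "\<exists>A\<in>Ob C. \<exists>g. g \<in> hom D (Fo A) B \<and> iso D g"
    using B unfolding nat_iso_def by (intro bexI[of _ "Go B"]) auto
qed

lemma equivalence_full:
  assumes "category C" and "category D" and "equivalence C D Fo Fa"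
  shows "full C D Fo Fa"
  unfolding full_def
proof (intro ballI)
  fix X Y g
  assume X: "X \<in> Ob C" and Y: "Y \<in> Ob C" and g: "g \<in> hom D (Fo X) (Fo Y)"
  obtain Go Ga \<eta> \<epsilon> where F: "functor C D Fo Fa" and G: "functor D C Go Ga"
    and \<eta>: "nat_iso C C id id (Go \<circ> Fo) (Ga \<circ> Fa) \<eta>"
    and \<epsilon>: "nat_iso D D (Fo \<circ> Go) (Fa \<circ> Ga) id id \<epsilon>"
    using assms(3) unfolding equivalence_def by blast
  have \<eta>X: "\<eta> X \<in> hom C X (Go (Fo X))" "iso C (\<eta> X)"
    and \<eta>Y: "\<eta> Y \<in> hom C Y (Go (Fo Y))" "iso C (\<eta> Y)"
    using \<eta> X Y by (simp_all add: nat_iso_def)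
  have \<eta>_natural: "Comp C (\<eta> (Cod C f)) f = Comp C (Ga (Fa f)) (\<eta> (Dom C f))" if "f \<in> Ar C" for f
    using \<eta> that by (simp add: nat_iso_def)
  have g': "g \<in> Ar D" "Dom D g = Fo X" "Cod D g = Fo Y"
    using g by (simp_all add: hom_def)
  define f where "f = Comp C (inv_ar C (\<eta> Y)) (Comp C (Ga g) (\<eta> X))"
  have f: "f \<in> Ar C" "Dom C f = X" "Cod C f = Y"
    unfolding f_def using assms(1) G g' \<eta>X \<eta>Y by (simp_all add: hom_def)
  have "Comp C (Ga (Fa f)) (\<eta> X) = Comp C (Ga g) (\<eta> X)"
    using \<eta>_natural[OF f(1)] f assms(1) G g' \<eta>X \<eta>Y unfolding f_def by (simp add: hom_def)
  then have "Ga (Fa f) = Ga g"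
    using iso_cancel_right[OF assms(1) \<eta>X(2)] assms F G f g' \<eta>X by (simp add: hom_def)
  then have "Fa f = g"
    using faithfulD[OF faithful_if_nat_iso_to_id[OF assms(2) \<epsilon>]] F f g' by simp
  then show "\<exists>f\<in>hom C X Y. Fa f = g"
    using f by (auto simp: hom_def)
qed

lemma full_faithful_reflects_iso:
  assumes "category C" and "category D" and "functor C D Fo Fa"
    and "faithful C Fa" and "full C D Fo Fa"
    and f: "f \<in> Ar C" and "iso D (Fa f)"
  shows "iso C f"
proof -
  have "inv_ar D (Fa f) \<in> hom D (Fo (Cod C f)) (Fo (Dom C f))"
    using assms by (simp add: hom_def)
  then obtain g where g: "g \<in> hom C (Cod C f) (Dom C f)" and Fg: "Fa g = inv_ar D (Fa f)"
    using assms(1,5) f unfolding full_def by force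
  have "Comp C g f = Idn C (Dom C f)" and "Comp C f g = Idn C (Cod C f)"
    using assms g Fg by (auto simp: hom_def intro: faithfulD[OF assms(4)])
  then show ?thesis
    unfolding iso_def using f g by blast
qed

definition lift_ar :: "('o, 'm, 'x) cat_scheme \<Rightarrow> ('m \<Rightarrow> 'n) \<Rightarrow> 'o \<Rightarrow> 'o \<Rightarrow> 'n \<Rightarrow> 'm" where
  "lift_ar C Fa X Y g = (SOME f. f \<in> hom C X Y \<and> Fa f = g)"

lemma lift_ar:
  assumes "full C D Fo Fa" and "X \<in> Ob C" and "Y \<in> Ob C"
    and "g \<in> Ar D" and "Dom D g = Fo X" and "Cod D g = Fo Y"
  shows "lift_ar C Fa X Y g \<in> Ar C"
    and "Dom C (lift_ar C Fa X Y g) = X"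
    and "Cod C (lift_ar C Fa X Y g) = Y"
    and "Fa (lift_ar C Fa X Y g) = g"
proof -
  have "\<exists>f. f \<in> hom C X Y \<and> Fa f = g"
    using assms unfolding full_def hom_def by blast
  then have "lift_ar C Fa X Y g \<in> hom C X Y \<and> Fa (lift_ar C Fa X Y g) = g"
    unfolding lift_ar_def by (rule someI_ex)
  then show "lift_ar C Fa X Y g \<in> Ar C" "Dom C (lift_ar C Fa X Y g) = X"
    "Cod C (lift_ar C Fa X Y g) = Y" "Fa (lift_ar C Fa X Y g) = g"
    by (simp_all add: hom_def)
qed

lemma full_faithful_ess_surj_imp_equivalence:
  assumes cC: "category C" and cD: "category D" and F: "functor C D Fo Fa"
    and fa: "faithful C Fa" and fu: "full C D Fo Fa" and "ess_surj C D Fo"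
  shows "equivalence C D Fo Fa"
proof -
  obtain Go \<epsilon> where Go: "\<And>B. B \<in> Ob D \<Longrightarrow> Go B \<in> Ob C"
    and \<epsilon>: "\<And>B. B \<in> Ob D \<Longrightarrow> \<epsilon> B \<in> hom D (Fo (Go B)) B \<and> iso D (\<epsilon> B)"
    using \<open>ess_surj C D Fo\<close> unfolding ess_surj_def by metis
  have \<epsilon>_simps [simp]: "\<epsilon> B \<in> Ar D" "Dom D (\<epsilon> B) = Fo (Go B)" "Cod D (\<epsilon> B) = B" "iso D (\<epsilon> B)"
    if "B \<in> Ob D" for B
    using \<epsilon>[OF that] by (simp_all add: hom_def)
  \<comment> \<open>All equations between arrows of \<open>C\<close> below are checked after applying the faithful \<open>Fa\<close>.\<close>
  define Ga where "Ga h = lift_ar C Fa (Go (Dom D h)) (Go (Cod D h))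
      (Comp D (inv_ar D (\<epsilon> (Cod D h))) (Comp D h (\<epsilon> (Dom D h))))" for h
  have Ga: "Ga h \<in> hom C (Go (Dom D h)) (Go (Cod D h))"
    and Fa_Ga: "Fa (Ga h) = Comp D (inv_ar D (\<epsilon> (Cod D h))) (Comp D h (\<epsilon> (Dom D h)))"
    if "h \<in> Ar D" for h
    unfolding Ga_def using that cD Go by (simp_all add: lift_ar[OF fu] hom_def)
  have G: "functor D C Go Ga"
    unfolding functor_def
    using Go Ga cC cD F Fa_Ga by (auto simp: hom_def intro!: faithfulD[OF fa])
  define \<eta> where "\<eta> X = lift_ar C Fa X (Go (Fo X)) (inv_ar D (\<epsilon> (Fo X)))" for X
  have \<eta>: "\<eta> X \<in> hom C X (Go (Fo X))" and Fa_\<eta>: "Fa (\<eta> X) = inv_ar D (\<epsilon> (Fo X))"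
    if "X \<in> Ob C" for X
    unfolding \<eta>_def using that cD F Go by (simp_all add: lift_ar[OF fu] iso_inv_ar hom_def)
  have "nat_iso C C id id (Go \<circ> Fo) (Ga \<circ> Fa) \<eta>"
    unfolding nat_iso_def
  proof (intro conjI ballI)
    fix X
    assume "X \<in> Ob C"
    then show "\<eta> X \<in> hom C (id X) ((Go \<circ> Fo) X)" and "iso C (\<eta> X)"
      using \<eta> Fa_\<eta> cD F
      by (auto simp: hom_def iso_inv_ar intro: full_faithful_reflects_iso[OF cC cD F fa fu])
  next
    fix f
    assume "f \<in> Ar C"
    then show "Comp C (\<eta> (Cod C f)) (id f) = Comp C ((Ga \<circ> Fa) f) (\<eta> (Dom C f))"
      using \<eta> Fa_\<eta> Ga Fa_Ga cC cD F by (auto simp: hom_def intro!: faithfulD[OF fa])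
  qed
  moreover have "nat_iso D D (Fo \<circ> Go) (Fa \<circ> Ga) id id \<epsilon>"
    unfolding nat_iso_def using \<epsilon> Fa_Ga cD by (auto simp: hom_def)
  ultimately show ?thesis
    unfolding equivalence_def using F G by blast
qed

lemma equivalence_iff_full_faithful_ess_surj:
  assumes "category C" and "category D" and "functor C D Fo Fa"
  shows "equivalence C D Fo Fa \<longleftrightarrow> faithful C Fa \<and> full C D Fo Fa \<and> ess_surj C D Fo"
  using equivalence_faithful[OF assms(1)] equivalence_full[OF assms(1,2)] equivalence_ess_surj
    full_faithful_ess_surj_imp_equivalence[OF assms] by blast

section \<open>Ordered tensor products in permutative categories\<close>

context
  fixes C :: "('o, 'm, 'x) pcat_scheme"
  assumes P: "permutative C"
begin

lemma permutative_category: "category C"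
  using P unfolding permutative_def by (elim conjE; simp)

lemma Unit_in_Ob [simp]: "Unit C \<in> Ob C"
  using P unfolding permutative_def by (elim conjE; simp)

lemma Ten_in_Ob [simp]: "X \<in> Ob C \<Longrightarrow> Y \<in> Ob C \<Longrightarrow> Ten C X Y \<in> Ob C"
  using P unfolding permutative_def by (elim conjE; simp)

lemma TenA_in_Ar [simp]: "f \<in> Ar C \<Longrightarrow> g \<in> Ar C \<Longrightarrow> TenA C f g \<in> Ar C"
  and Dom_TenA [simp]: "f \<in> Ar C \<Longrightarrow> g \<in> Ar C \<Longrightarrow> Dom C (TenA C f g) = Ten C (Dom C f) (Dom C g)"
  and Cod_TenA [simp]: "f \<in> Ar C \<Longrightarrow> g \<in> Ar C \<Longrightarrow> Cod C (TenA C f g) = Ten C (Cod C f) (Cod C g)"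
  using P unfolding permutative_def by (elim conjE; simp add: hom_def)+

lemma TenA_Idn [simp]: "X \<in> Ob C \<Longrightarrow> Y \<in> Ob C \<Longrightarrow> TenA C (Idn C X) (Idn C Y) = Idn C (Ten C X Y)"
  using P unfolding permutative_def by (elim conjE; simp)

lemma TenA_Comp:
  "f \<in> Ar C \<Longrightarrow> g \<in> Ar C \<Longrightarrow> f' \<in> Ar C \<Longrightarrow> g' \<in> Ar C \<Longrightarrow> Cod C f = Dom C g \<Longrightarrow> Cod C f' = Dom C g' \<Longrightarrow>
   TenA C (Comp C g f) (Comp C g' f') = Comp C (TenA C g g') (TenA C f f')"
  using P unfolding permutative_def by (elim conjE; simp)

lemma Ten_Unit_left [simp]: "X \<in> Ob C \<Longrightarrow> Ten C (Unit C) X = X"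
  and Ten_Unit_right [simp]: "X \<in> Ob C \<Longrightarrow> Ten C X (Unit C) = X"
  using P unfolding permutative_def by (elim conjE; simp)+

lemma iso_TenA:
  assumes f: "iso C f" and g: "iso C g"
  shows "iso C (TenA C f g)"
proof -
  note cat = permutative_category
  let ?h = "TenA C (inv_ar C f) (inv_ar C g)"
  have "?h \<in> hom C (Cod C (TenA C f g)) (Dom C (TenA C f g))"
    using f g by (simp add: hom_def)
  moreover have "Comp C ?h (TenA C f g) = Idn C (Dom C (TenA C f g))"
    and "Comp C (TenA C f g) ?h = Idn C (Cod C (TenA C f g))"
    using f g cat by (simp_all flip: TenA_Comp)
  ultimately show ?thesis
    unfolding iso_def using f g by (meson TenA_in_Ar iso_in_Ar)
qed

lemma foldr_Ten_in_Ob: "set Xs \<subseteq> Ob C \<Longrightarrow> U \<in> Ob C \<Longrightarrow> foldr (Ten C) Xs U \<in> Ob C"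
  by (induction Xs) auto

lemma iso_foldr_TenA:
  assumes "\<forall>g\<in>set gs. iso C g"
  shows "iso C (foldr (TenA C) gs (Idn C (Unit C)))"
    and "Dom C (foldr (TenA C) gs (Idn C (Unit C))) = foldr (Ten C) (map (Dom C) gs) (Unit C)"
    and "Cod C (foldr (TenA C) gs (Idn C (Unit C))) = foldr (Ten C) (map (Cod C) gs) (Unit C)"
  using assms by (induction gs) (simp_all add: permutative_category iso_TenA)

end

definition ten_upto :: "('o, 'm, 'x) pcat_scheme \<Rightarrow> (nat \<Rightarrow> 'o) \<Rightarrow> nat \<Rightarrow> 'o" where
  "ten_upto C X n = foldr (Ten C) (map X [0..<n]) (Unit C)"

lemma ten_upto_add_Unit:
  assumes "permutative C" and "\<forall>i\<ge>n. X i = Unit C"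
  shows "ten_upto C X (n + k) = ten_upto C X n"
proof (induction k)
  case (Suc k)
  have "X (n + k) = Unit C"
    using assms(2) by simp
  then show ?case
    using Suc.IH assms(1) by (simp add: ten_upto_def)
qed simp

lemma bigten_eq_ten_upto:
  assumes "permutative C" and "\<forall>i\<ge>n. X i = Unit C"
  shows "bigten C X = ten_upto C X n"
proof -
  define L where "L = (LEAST n. \<forall>i\<ge>n. X i = Unit C)"
  have "L \<le> n" and L: "\<forall>i\<ge>L. X i = Unit C"
    unfolding L_def using assms(2) by (rule Least_le, rule LeastI)
  then have "ten_upto C X n = ten_upto C X L"
    using ten_upto_add_Unit[OF assms(1) L, of "n - L"] by simp
  then show ?thesis
    unfolding bigten_def ten_upto_def L_def by simp
qed

lemma Phi_obs_eventually_Unit: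
  assumes "X \<in> Phi_obs C"
  obtains n where "\<forall>i\<ge>n. X i = Unit C"
proof -
  have "finite {i. X i \<noteq> Unit C}"
    using assms by (simp add: Phi_obs_def)
  then obtain n where "\<forall>i\<in>{i. X i \<noteq> Unit C}. i < n"
    unfolding finite_nat_set_iff_bounded by blast
  then have "\<forall>i\<ge>n. X i = Unit C"
    by (meson mem_Collect_eq not_le)
  then show ?thesis
    by (rule that)
qed

lemma bigten_in_Ob:
  assumes "permutative C" and "X \<in> Phi_obs C"
  shows "bigten C X \<in> Ob C"
proof -
  obtain n where "\<forall>i\<ge>n. X i = Unit C"
    using assms(2) by (rule Phi_obs_eventually_Unit)
  moreover have "\<forall>i. X i \<in> Ob C"
    using assms(2) by (simp add: Phi_obs_def)
  ultimately show ?thesis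
    unfolding bigten_eq_ten_upto[OF assms(1) \<open>\<forall>i\<ge>n. X i = Unit C\<close>] ten_upto_def
    by (intro foldr_Ten_in_Ob[OF assms(1)]) (auto simp: assms(1))
qed

definition single_seq :: "('o, 'm, 'x) pcat_scheme \<Rightarrow> 'o \<Rightarrow> nat \<Rightarrow> 'o" where
  "single_seq C A = (\<lambda>i. if i = 0 then A else Unit C)"

lemma single_seq_in_Phi_obs:
  assumes "permutative C" and "A \<in> Ob C"
  shows "single_seq C A \<in> Phi_obs C"
proof -
  have "{i. single_seq C A i \<noteq> Unit C} \<subseteq> {0}"
    unfolding single_seq_def by auto
  then show ?thesis
    using assms unfolding Phi_obs_def by (auto simp: single_seq_def intro: finite_subset)
qed

lemma bigten_single_seq:
  assumes "permutative C" and "A \<in> Ob C"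
  shows "bigten C (single_seq C A) = A"
proof -
  have "\<forall>i\<ge>1. single_seq C A i = Unit C"
    unfolding single_seq_def by simp
  then have "bigten C (single_seq C A) = ten_upto C (single_seq C A) 1"
    by (rule bigten_eq_ten_upto[OF assms(1)])
  then show ?thesis
    using assms by (simp add: ten_upto_def single_seq_def)
qed

section \<open>The category \<open>\<Phi>(C)\<close> and the functor \<open>\<Phi>(F)\<close>\<close>

lemma Ob_Phi [simp]: "Ob (Phi C) = Phi_obs C"
  by (simp add: Phi_def)

lemma mem_Ar_Phi [simp]:
  "(X, Y, f) \<in> Ar (Phi C) \<longleftrightarrow> X \<in> Phi_obs C \<and> Y \<in> Phi_obs C \<and> f \<in> hom C (bigten C X) (bigten C Y)"
  by (simp add: Phi_def)

lemma Dom_Phi [simp]: "Dom (Phi C) (X, Y, f) = X"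
  and Cod_Phi [simp]: "Cod (Phi C) (X, Y, f) = Y"
  and Idn_Phi [simp]: "Idn (Phi C) X = (X, X, Idn C (bigten C X))"
  and Comp_Phi [simp]: "Comp (Phi C) (Y', Z, g) (X, Y, f) = (X, Z, Comp C g f)"
  by (simp_all add: Phi_def)

lemma Ar_PhiE:
  assumes "p \<in> Ar (Phi C)"
  obtains X Y f where "p = (X, Y, f)" and "X \<in> Phi_obs C" and "Y \<in> Phi_obs C"
    and "f \<in> Ar C" and "Dom C f = bigten C X" and "Cod C f = bigten C Y"
  using assms by (auto simp: Phi_def hom_def)

lemma category_Phi:
  assumes "permutative C"
  shows "category (Phi C)"
  using permutative_category[OF assms] bigten_in_Ob[OF assms]
  unfolding category_def Phi_def hom_def by auto

lemma iso_Phi_iff: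
  assumes "permutative C" and "(X, Y, f) \<in> Ar (Phi C)"
  shows "iso (Phi C) (X, Y, f) \<longleftrightarrow> iso C f"
proof
  assume "iso (Phi C) (X, Y, f)"
  then obtain g where "(Y, X, g) \<in> Ar (Phi C)"
    and "Comp C g f = Idn C (bigten C X)" and "Comp C f g = Idn C (bigten C Y)"
    unfolding iso_def hom_def by auto
  then show "iso C f"
    using assms(2) unfolding iso_def by (intro conjI bexI[of _ g]) (auto simp: hom_def)
next
  assume "iso C f"
  then have "(Y, X, inv_ar C f) \<in> hom (Phi C) Y X"
    using assms(2) by (simp add: hom_def)
  then show "iso (Phi C) (X, Y, f)"
    using \<open>iso C f\<close> assms(2) unfolding iso_def by (auto simp: hom_def)
qed

lemma iso_Phi_if_componentwise_iso:
  assumes P: "permutative C" and X: "X \<in> Phi_obs C" and Y: "Y \<in> Phi_obs C"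
    and iso_i: "\<And>i. \<exists>g. g \<in> hom C (X i) (Y i) \<and> iso C g"
  shows "\<exists>q. q \<in> hom (Phi C) X Y \<and> iso (Phi C) q"
proof -
  obtain g where g: "\<And>i. g i \<in> hom C (X i) (Y i)" and iso_g: "\<And>i. iso C (g i)"
    using iso_i by metis
  obtain m n where "\<forall>i\<ge>m. X i = Unit C" and "\<forall>i\<ge>n. Y i = Unit C"
    using X Y by (meson Phi_obs_eventually_Unit)
  then have XY: "\<forall>i\<ge>max m n. X i = Unit C" "\<forall>i\<ge>max m n. Y i = Unit C"
    by simp_all
  define G where "G = foldr (TenA C) (map g [0..<max m n]) (Idn C (Unit C))"
  have "iso C G" and "Dom C G = bigten C X" and "Cod C G = bigten C Y"
    using iso_foldr_TenA[OF P, of "map g [0..<max m n]"] g iso_g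
    unfolding G_def bigten_eq_ten_upto[OF P XY(1)] bigten_eq_ten_upto[OF P XY(2)] ten_upto_def
    by (simp_all add: hom_def comp_def)
  then show ?thesis
    using P X Y by (intro exI[of _ "(X, Y, G)"]) (simp add: iso_Phi_iff hom_def)
qed

context
  fixes C :: "('o, 'm, 'x) pcat_scheme" and D :: "('p, 'n, 'y) pcat_scheme"
    and Fo :: "'o \<Rightarrow> 'p" and Fa :: "'m \<Rightarrow> 'n"
  assumes P: "permutative C" and Q: "permutative D"
    and S: "strict_sym_monoidal_functor C D Fo Fa"
begin

lemma functor_if_strict_sym_monoidal: "functor C D Fo Fa"
  using S unfolding strict_sym_monoidal_functor_def by blast

lemma Fo_Unit [simp]: "Fo (Unit C) = Unit D"
  using S unfolding strict_sym_monoidal_functor_def by blast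

lemma Fo_Ten [simp]: "X \<in> Ob C \<Longrightarrow> Y \<in> Ob C \<Longrightarrow> Fo (Ten C X Y) = Ten D (Fo X) (Fo Y)"
  using S unfolding strict_sym_monoidal_functor_def by blast

lemma Fo_foldr_Ten:
  "set Xs \<subseteq> Ob C \<Longrightarrow> U \<in> Ob C \<Longrightarrow> Fo (foldr (Ten C) Xs U) = foldr (Ten D) (map Fo Xs) (Fo U)"
  by (induction Xs) (simp_all add: foldr_Ten_in_Ob[OF P])

lemma Phi_ob_in_Phi_obs: "X \<in> Phi_obs C \<Longrightarrow> Phi_ob Fo X \<in> Phi_obs D"
  unfolding Phi_obs_def Phi_ob_def
  by (auto simp: functor_Ob[OF functor_if_strict_sym_monoidal] elim!: rev_finite_subset)

lemma Fo_bigten: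
  assumes "X \<in> Phi_obs C"
  shows "Fo (bigten C X) = bigten D (Phi_ob Fo X)"
proof -
  obtain n where n: "\<forall>i\<ge>n. X i = Unit C"
    using assms by (rule Phi_obs_eventually_Unit)
  then have n': "\<forall>i\<ge>n. Phi_ob Fo X i = Unit D"
    by (simp add: Phi_ob_def)
  have "set (map X [0..<n]) \<subseteq> Ob C"
    using assms by (auto simp: Phi_obs_def)
  then have "Fo (ten_upto C X n) = ten_upto D (Phi_ob Fo X) n"
    unfolding ten_upto_def by (simp add: Fo_foldr_Ten P Phi_ob_def comp_def)
  then show ?thesis
    by (simp add: bigten_eq_ten_upto[OF P n] bigten_eq_ten_upto[OF Q n'])
qed

lemma Phi_ob_single_seq: "Phi_ob Fo (single_seq C A) = single_seq D (Fo A)"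
  unfolding Phi_ob_def single_seq_def by auto

lemma functor_Phi: "functor (Phi C) (Phi D) (Phi_ob Fo) (Phi_ar Fo Fa)"
  unfolding functor_def
  using functor_if_strict_sym_monoidal bigten_in_Ob[OF P] Phi_ob_in_Phi_obs Fo_bigten
  by (auto simp: Phi_ar_def hom_def)

lemma faithful_Phi_iff: "faithful (Phi C) (Phi_ar Fo Fa) \<longleftrightarrow> faithful C Fa"
proof
  assume fa: "faithful (Phi C) (Phi_ar Fo Fa)"
  show "faithful C Fa"
    unfolding faithful_def
  proof (intro ballI impI)
    fix f g
    assume fg: "f \<in> Ar C" "g \<in> Ar C" "Dom C f = Dom C g" "Cod C f = Cod C g" "Fa f = Fa g"
    let ?A = "single_seq C (Dom C f)" and ?B = "single_seq C (Cod C f)"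
    have "(?A, ?B, f) = (?A, ?B, g)"
      using fg permutative_category[OF P]
      by (intro faithfulD[OF fa]) (simp_all add: single_seq_in_Phi_obs[OF P] bigten_single_seq[OF P]
          hom_def Phi_ar_def)
    then show "f = g"
      by simp
  qed
next
  assume "faithful C Fa"
  then show "faithful (Phi C) (Phi_ar Fo Fa)"
    unfolding faithful_def Phi_ar_def by (auto elim!: Ar_PhiE)
qed

lemma full_Phi_iff: "full (Phi C) (Phi D) (Phi_ob Fo) (Phi_ar Fo Fa) \<longleftrightarrow> full C D Fo Fa"
proof
  assume fu: "full (Phi C) (Phi D) (Phi_ob Fo) (Phi_ar Fo Fa)"
  show "full C D Fo Fa"
    unfolding full_def
  proof (intro ballI)
    fix A B g
    assume A: "A \<in> Ob C" and B: "B \<in> Ob C" and g: "g \<in> hom D (Fo A) (Fo B)"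
    let ?A = "single_seq C A" and ?B = "single_seq C B"
    have "(Phi_ob Fo ?A, Phi_ob Fo ?B, g) \<in> hom (Phi D) (Phi_ob Fo ?A) (Phi_ob Fo ?B)"
      using A B g functor_if_strict_sym_monoidal
      by (simp add: Phi_ob_single_seq single_seq_in_Phi_obs[OF Q] bigten_single_seq[OF Q] hom_def)
    then obtain p where "p \<in> hom (Phi C) ?A ?B"
      and "Phi_ar Fo Fa p = (Phi_ob Fo ?A, Phi_ob Fo ?B, g)"
      using fu A B single_seq_in_Phi_obs[OF P] unfolding full_def by (metis Ob_Phi)
    then show "\<exists>f\<in>hom C A B. Fa f = g"
      using A B by (auto simp: hom_def Phi_ar_def bigten_single_seq[OF P] elim!: Ar_PhiE)
  qed
next
  assume fu: "full C D Fo Fa"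
  show "full (Phi C) (Phi D) (Phi_ob Fo) (Phi_ar Fo Fa)"
    unfolding full_def
  proof (intro ballI)
    fix X Y q
    assume X: "X \<in> Ob (Phi C)" and Y: "Y \<in> Ob (Phi C)"
      and q: "q \<in> hom (Phi D) (Phi_ob Fo X) (Phi_ob Fo Y)"
    obtain g where q_eq: "q = (Phi_ob Fo X, Phi_ob Fo Y, g)"
      and g: "g \<in> hom D (Fo (bigten C X)) (Fo (bigten C Y))"
      using q X Y by (auto simp: hom_def Fo_bigten elim!: Ar_PhiE)
    then obtain f where "f \<in> hom C (bigten C X) (bigten C Y)" and "Fa f = g"
      using fu X Y bigten_in_Ob[OF P] unfolding full_def by (metis Ob_Phi)
    then show "\<exists>p\<in>hom (Phi C) X Y. Phi_ar Fo Fa p = q"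
      using X Y q_eq by (intro bexI[of _ "(X, Y, f)"]) (simp_all add: hom_def Phi_ar_def)
  qed
qed

lemma ess_surj_Phi_obsE:
  assumes "ess_surj C D Fo" and Y: "Y \<in> Phi_obs D"
  obtains X where "X \<in> Phi_obs C" and "\<And>i. \<exists>g. g \<in> hom D (Fo (X i)) (Y i) \<and> iso D g"
proof -
  \<comment> \<open>Choosing \<open>X i = Unit C\<close> wherever \<open>Y i = Unit D\<close> keeps \<open>X\<close> finitely supported.\<close>
  have "\<exists>A. A \<in> Ob C \<and> (Y i = Unit D \<longrightarrow> A = Unit C) \<and> (\<exists>g. g \<in> hom D (Fo A) (Y i) \<and> iso D g)"
    for i
  proof (cases "Y i = Unit D")
    case True
    then show ?thesis
      using permutative_category[OF Q] iso_Idn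
      by (intro exI[of _ "Unit C"]) (auto simp: P Q hom_def intro!: exI[of _ "Idn D (Unit D)"])
  next
    case False
    then show ?thesis
      using assms unfolding ess_surj_def Phi_obs_def by blast
  qed
  then obtain X where X_Ob: "\<And>i. X i \<in> Ob C" and X_Unit: "\<And>i. Y i = Unit D \<Longrightarrow> X i = Unit C"
    and X_iso: "\<And>i. \<exists>g. g \<in> hom D (Fo (X i)) (Y i) \<and> iso D g"
    by metis
  have "{i. X i \<noteq> Unit C} \<subseteq> {i. Y i \<noteq> Unit D}"
    using X_Unit by blast
  then have "X \<in> Phi_obs C"
    using X_Ob Y unfolding Phi_obs_def by (auto intro: finite_subset)
  then show ?thesis
    using X_iso by (rule that)
qed

lemma ess_surj_Phi_iff: "ess_surj (Phi C) (Phi D) (Phi_ob Fo) \<longleftrightarrow> ess_surj C D Fo"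
proof
  assume es: "ess_surj (Phi C) (Phi D) (Phi_ob Fo)"
  show "ess_surj C D Fo"
    unfolding ess_surj_def
  proof
    fix B
    assume B: "B \<in> Ob D"
    then obtain X q where X: "X \<in> Phi_obs C"
      and q: "q \<in> hom (Phi D) (Phi_ob Fo X) (single_seq D B)" "iso (Phi D) q"
      using es single_seq_in_Phi_obs[OF Q] unfolding ess_surj_def by (metis Ob_Phi)
    from q(1) obtain g where "q = (Phi_ob Fo X, single_seq D B, g)"
      and g: "g \<in> hom D (Fo (bigten C X)) B"
      using B by (auto simp: hom_def Fo_bigten[OF X] bigten_single_seq[OF Q] elim!: Ar_PhiE)
    with q have "iso D g"
      using iso_Phi_iff[OF Q] by (auto simp: hom_def)
    then show "\<exists>A\<in>Ob C. \<exists>g. g \<in> hom D (Fo A) B \<and> iso D g"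
      using g X bigten_in_Ob[OF P] by blast
  qed
next
  assume "ess_surj C D Fo"
  show "ess_surj (Phi C) (Phi D) (Phi_ob Fo)"
    unfolding ess_surj_def
  proof
    fix Y
    assume "Y \<in> Ob (Phi D)"
    then obtain X where X: "X \<in> Phi_obs C"
      and X_iso: "\<And>i. \<exists>g. g \<in> hom D (Fo (X i)) (Y i) \<and> iso D g"
      using \<open>ess_surj C D Fo\<close> by (auto elim: ess_surj_Phi_obsE)
    then obtain q where "q \<in> hom (Phi D) (Phi_ob Fo X) Y" and "iso (Phi D) q"
      using iso_Phi_if_componentwise_iso[OF Q Phi_ob_in_Phi_obs] \<open>Y \<in> Ob (Phi D)\<close>
      unfolding Phi_ob_def by (metis Ob_Phi)
    then show "\<exists>A\<in>Ob (Phi C). \<exists>q. q \<in> hom (Phi D) (Phi_ob Fo A) Y \<and> iso (Phi D) q"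
      using X by (metis Ob_Phi)
  qed
qed

end

theorem lemma1p25:
  fixes C :: "('o, 'm) pcat" and D :: "('p, 'n) pcat"
    and Fo :: "'o \<Rightarrow> 'p" and Fa :: "'m \<Rightarrow> 'n"
  assumes "permutative C" and "permutative D"
    and "strict_sym_monoidal_functor C D Fo Fa"
  shows "equivalence C D Fo Fa \<longleftrightarrow> equivalence (Phi C) (Phi D) (Phi_ob Fo) (Phi_ar Fo Fa)"
  using equivalence_iff_full_faithful_ess_surj[OF permutative_category[OF assms(1)]
      permutative_category[OF assms(2)] functor_if_strict_sym_monoidal[OF assms]]
    equivalence_iff_full_faithful_ess_surj[OF category_Phi[OF assms(1)] category_Phi[OF assms(2)]
      functor_Phi[OF assms]]
    faithful_Phi_iff[OF assms] full_Phi_iff[OF assms] ess_surj_Phi_iff[OF assms]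
  by simp

end
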